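(* Let $\phi$ be a uniformly convex norm on $\mathbf{R}^n$ of class $\mathcal{C}^2$ on $\mathbf{R}^n\setminus\{0\}$, $K\subseteq\mathbf{R}^n$ closed, $\rho>0$, $U=\{x:\delta^\phi_K(x)<\rho\}$, and suppose $U\cap\Sigma^\phi(K)=\varnothing$. Then $\underline{r}^\phi_K(a,\eta)\ge\rho$ for every $(a,\eta)\in N^\phi(K)$. In particular, if $K$ is convex then $\underline{r}^\phi_K(a,\eta)=+\infty$ for every $(a,\eta)\in N^\phi(K)$.
   Context: A norm $\phi$ is uniformly convex if there is $\gamma>0$ with $x\mapsto\phi(x)-\gamma|x|$ convex. For closed $K$: $\delta^\phi_K(x)=\inf\{\phi(y-x):y\in K\}$; $\Sigma^\phi(K)$ is the set of $x\in\mathbf{R}^n\setminus K$ at which $\delta^\phi_K$ is not differentiable; $N^\phi(K)=\{(a,\eta):a\in K,\ \phi(\eta)=1,\ \delta^\phi_K(a+s\eta)=s\text{ for some }s>0\}$; $r^\phi_K(a,\eta)=\sup\{s>0:\delta^\phi_K(a+s\eta)=s\}$; for $\sigma\ge1$, $K_\sigma=\{a+\rho'\eta:(a,\eta)\in N^\phi(K),\ 0<\sigma\rho'\le r^\phi_K(a,\eta)\}$; $\Theta^n(\mu,x)=\lim_{r\downarrow0}\mu(\mathbf{B}(x,r))/(\alpha(n)r^n)$; $\underline{r}^\phi_K(a,\eta)=\sup\bigl(\{\sigma r:0<r<r^\phi_K(a,\eta),\ \sigma>1,\ \Theta^n(\mathscr{L}^n\llcorner K_\sigma,a+r\eta)=1\}\cup\{0\}\bigr)$.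 *)

theory Defs
  imports "HOL-Analysis.Analysis"
begin

definition is_norm :: "('a::euclidean_space \<Rightarrow> real) \<Rightarrow> bool" where
  "is_norm \<phi> \<longleftrightarrow> (\<forall>x. 0 \<le> \<phi> x) \<and> (\<forall>x. \<phi> x = 0 \<longleftrightarrow> x = 0)
     \<and> (\<forall>t x. \<phi> (t *\<^sub>R x) = \<bar>t\<bar> * \<phi> x) \<and> (\<forall>x y. \<phi> (x + y) \<le> \<phi> x + \<phi> y)"

definition uniformly_convex_norm :: "('a::euclidean_space \<Rightarrow> real) \<Rightarrow> bool" where
  "uniformly_convex_norm \<phi> \<longleftrightarrow> is_norm \<phi> \<and>
     (\<exists>\<gamma>>0. convex_on UNIV (\<lambda>x. \<phi> x - \<gamma> * norm x))"

definition C2_on :: "'a::euclidean_space set \<Rightarrow> ('a \<Rightarrow> real) \<Rightarrow> bool" where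
  "C2_on S f \<longleftrightarrow> (\<exists>(f'::'a \<Rightarrow> ('a \<Rightarrow>\<^sub>L real)) (f''::'a \<Rightarrow> ('a \<Rightarrow>\<^sub>L ('a \<Rightarrow>\<^sub>L real))).
     (\<forall>x\<in>S. (f has_derivative blinfun_apply (f' x)) (at x)) \<and>
     (\<forall>x\<in>S. (f' has_derivative blinfun_apply (f'' x)) (at x)) \<and>
     continuous_on S f'')"

definition dist_fun :: "('a::euclidean_space \<Rightarrow> real) \<Rightarrow> 'a set \<Rightarrow> 'a \<Rightarrow> real" where
  "dist_fun \<phi> K x = Inf {\<phi> (y - x) | y. y \<in> K}"

definition Sigma_set :: "('a::euclidean_space \<Rightarrow> real) \<Rightarrow> 'a set \<Rightarrow> 'a set" where
  "Sigma_set \<phi> K = {x. x \<notin> K \<and> \<not> (dist_fun \<phi> K differentiable (at x))}"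

definition normal_bundle :: "('a::euclidean_space \<Rightarrow> real) \<Rightarrow> 'a set \<Rightarrow> ('a \<times> 'a) set" where
  "normal_bundle \<phi> K = {(a, \<eta>). a \<in> K \<and> \<phi> \<eta> = 1 \<and>
      (\<exists>s>0. dist_fun \<phi> K (a + s *\<^sub>R \<eta>) = s)}"

definition reach :: "('a::euclidean_space \<Rightarrow> real) \<Rightarrow> 'a set \<Rightarrow> 'a \<Rightarrow> 'a \<Rightarrow> ereal" where
  "reach \<phi> K a \<eta> = Sup (ereal ` {s. s > 0 \<and> dist_fun \<phi> K (a + s *\<^sub>R \<eta>) = s})"

definition K_sigma :: "('a::euclidean_space \<Rightarrow> real) \<Rightarrow> 'a set \<Rightarrow> real \<Rightarrow> 'a set" where
  "K_sigma \<phi> K \<sigma> = {a + \<rho>' *\<^sub>R \<eta> | a \<eta> \<rho>'. (a, \<eta>) \<in> normal_bundle \<phi> K \<and> 0 < \<sigma> * \<rho>'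
      \<and> ereal (\<sigma> * \<rho>') \<le> reach \<phi> K a \<eta>}"

definition lebesgue_outer :: "'a::euclidean_space set \<Rightarrow> ennreal" where
  "lebesgue_outer A = (INF B \<in> {B. B \<in> sets lebesgue \<and> A \<subseteq> B}. emeasure lebesgue B)"

text \<open>Theta^n(L^n restricted to A, x) = 1 (closed balls, alpha(n) = volume of the unit ball).\<close>
definition density_one :: "'a::euclidean_space set \<Rightarrow> 'a \<Rightarrow> bool" where
  "density_one A x \<longleftrightarrow>
     ((\<lambda>r. enn2real (lebesgue_outer (A \<inter> cball x r)) /
           (measure lebesgue (cball (0::'a) 1) * r ^ DIM('a))) \<longlongrightarrow> 1) (at_right 0)"

definition lower_reach :: "('a::euclidean_space \<Rightarrow> real) \<Rightarrow> 'a set \<Rightarrow> 'a \<Rightarrow> 'a \<Rightarrow> ereal" where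
  "lower_reach \<phi> K a \<eta> = Sup ({ereal (\<sigma> * r) | \<sigma> r. 0 < r \<and> ereal r < reach \<phi> K a \<eta> \<and> \<sigma> > 1
       \<and> density_one (K_sigma \<phi> K \<sigma>) (a + r *\<^sub>R \<eta>)} \<union> {0})"

end

theory Submission
  imports Defs
begin

text \<open>
  Off K, wherever \<open>dist_fun \<phi> K\<close> is differentiable the nearest point of K is unique: the
  differential of the distance at x fixes the differential of \<open>\<phi>\<close> at \<open>b - x\<close> for every nearest
  point b, and the differential of a strictly convex differentiable norm is injective on spheres.
  So nearest point and outer normal n are continuous on \<open>{0 < dist_fun \<phi> K < \<rho>}\<close>.  If a normal
  ray from a minimises the distance up to length \<open>T < \<rho>\<close>, a Brouwer fixed point of
  \<open>w \<mapsto> x + \<epsilon> n(w)\<close> on a small \<open>\<phi>\<close>-ball around \<open>x = a + T \<eta>\<close> is the point \<open>x + \<epsilon> \<eta>\<close>, still at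
  distance \<open>T + \<epsilon>\<close>; hence every normal ray minimises up to length \<open>\<rho>\<close> and all reaches are at
  least \<open>\<rho>\<close>.  For \<open>\<sigma> > 1\<close> the open shell \<open>{0 < dist_fun \<phi> K < \<rho> / \<sigma>}\<close> then lies in
  \<open>K_sigma \<phi> K \<sigma>\<close>, so each \<open>a + r \<eta>\<close> with \<open>\<sigma> r < \<rho>\<close> is an interior, hence density, point of it.
  For convex K all normal rays minimise forever and the complement of K lies in every
  \<open>K_sigma \<phi> K \<sigma>\<close>.
\<close>

section \<open>Norms on Euclidean space\<close>

locale norm_function =
  fixes \<phi> :: "'a::euclidean_space \<Rightarrow> real"
  assumes is_norm: "is_norm \<phi>"
begin

lemma nonneg [simp]: "0 \<le> \<phi> x"
  using is_norm by (simp add: is_norm_def)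

lemma eq_0_iff [simp]: "\<phi> x = 0 \<longleftrightarrow> x = 0"
  using is_norm by (simp add: is_norm_def)

lemma scaleR [simp]: "\<phi> (t *\<^sub>R x) = \<bar>t\<bar> * \<phi> x"
  using is_norm by (simp add: is_norm_def)

lemma triangle: "\<phi> (x + y) \<le> \<phi> x + \<phi> y"
  using is_norm by (simp add: is_norm_def)

lemma zero [simp]: "\<phi> 0 = 0"
  by simp

lemma minus [simp]: "\<phi> (- x) = \<phi> x"
  using scaleR[of "-1" x] by simp

lemma minus_commute: "\<phi> (x - y) = \<phi> (y - x)"
  using minus[of "x - y"] by simp

lemma diff_triangle: "\<phi> (x - z) \<le> \<phi> (x - y) + \<phi> (y - z)"
  using triangle[of "x - y" "y - z"] by simp

lemma pos_iff: "0 < \<phi> x \<longleftrightarrow> x \<noteq> 0"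
  using nonneg[of x] eq_0_iff[of x] by linarith

lemma sum_le: "\<phi> (sum f S) \<le> (\<Sum>i\<in>S. \<phi> (f i))"
proof (induction S rule: infinite_finite_induct)
  case (insert x F)
  then show ?case using triangle[of "f x" "sum f F"] by simp
qed simp_all

lemma phi_le_multiple_norm: "\<exists>M>0. \<forall>x. \<phi> x \<le> M * norm x"
proof (intro exI conjI allI)
  define M where "M = 1 + (\<Sum>i\<in>Basis. \<phi> i)"
  show "M > 0"
    unfolding M_def by (simp add: add_pos_nonneg sum_nonneg)
  fix x
  have "\<phi> x = \<phi> (\<Sum>i\<in>Basis. (x \<bullet> i) *\<^sub>R i)"
    by (simp add: euclidean_representation)
  also have "\<dots> \<le> (\<Sum>i\<in>Basis. \<bar>x \<bullet> i\<bar> * \<phi> i)"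
    using sum_le[of "\<lambda>i. (x \<bullet> i) *\<^sub>R i" Basis] by simp
  also have "\<dots> \<le> (\<Sum>i\<in>Basis. norm x * \<phi> i)"
    by (intro sum_mono mult_right_mono) (auto simp: Basis_le_norm)
  also have "\<dots> \<le> M * norm x"
    unfolding M_def by (simp add: sum_distrib_left algebra_simps)
  finally show "\<phi> x \<le> M * norm x" .
qed

lemma continuous_on_phi: "continuous_on S \<phi>"
proof -
  obtain M where "M > 0" and M: "\<And>x. \<phi> x \<le> M * norm x"
    using phi_le_multiple_norm by blast
  have "\<bar>\<phi> x - \<phi> y\<bar> \<le> M * norm (x - y)" for x y
    using triangle[of "x - y" y] triangle[of "y - x" x] M[of "x - y"] minus_commute[of x y]
    by simp
  then have "M-lipschitz_on S \<phi>"
    using \<open>M > 0\<close> by (intro lipschitz_onI) (auto simp: dist_norm dist_real_def)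
  then show ?thesis
    by (rule lipschitz_on_continuous_on)
qed

lemma continuous_on_phi_compose [continuous_intros]:
  "continuous_on S f \<Longrightarrow> continuous_on S (\<lambda>x. \<phi> (f x))"
  by (rule continuous_on_compose2[OF continuous_on_phi[of UNIV]]) auto

lemma norm_le_multiple_phi: "\<exists>C>0. \<forall>x. norm x \<le> C * \<phi> x"
proof -
  obtain b :: 'a where "b \<in> Basis"
    using nonempty_Basis by blast
  then have "sphere (0::'a) 1 \<noteq> {}"
    by (auto intro!: exI[of _ b])
  then obtain z where z: "z \<in> sphere 0 1" "\<And>y. y \<in> sphere 0 1 \<Longrightarrow> \<phi> z \<le> \<phi> y"
    using continuous_attains_inf[OF compact_sphere _ continuous_on_phi] by blast
  have pos: "\<phi> z > 0"
    using z(1) by (auto simp: pos_iff)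
  have "norm x \<le> (1 / \<phi> z) * \<phi> x" for x
  proof (cases "x = 0")
    case False
    have "\<phi> z \<le> \<phi> ((1 / norm x) *\<^sub>R x)"
      using z(2)[of "(1 / norm x) *\<^sub>R x"] False by simp
    then show ?thesis
      using False pos by (simp add: field_simps)
  qed simp
  then show ?thesis
    using pos by (intro exI[of _ "1 / \<phi> z"]) auto
qed

lemma closed_sublevel: "closed {w. \<phi> (w - x) \<le> e}"
  by (intro closed_Collect_le continuous_intros)

lemma compact_sublevel: "compact {w. \<phi> (w - x) \<le> e}"
proof -
  obtain C where "C > 0" and C: "\<And>v. norm v \<le> C * \<phi> v"
    using norm_le_multiple_phi by blast
  have "norm (w - x) \<le> C * e" if "\<phi> (w - x) \<le> e" for w
    using C[of "w - x"] mult_left_mono[OF that, of C] \<open>C > 0\<close> by linarith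
  then have "{w. \<phi> (w - x) \<le> e} \<subseteq> cball x (C * e)"
    by (auto simp: dist_norm norm_minus_commute)
  then show ?thesis
    using closed_sublevel by (meson bounded_cball bounded_subset compact_eq_bounded_closed)
qed

lemma convex_sublevel: "convex {w. \<phi> (w - x) \<le> e}"
proof (rule convexI)
  fix u v and s t :: real
  assume "u \<in> {w. \<phi> (w - x) \<le> e}" "v \<in> {w. \<phi> (w - x) \<le> e}" "0 \<le> s" "0 \<le> t" "s + t = 1"
  moreover have "s *\<^sub>R u + t *\<^sub>R v - x = s *\<^sub>R (u - x) + t *\<^sub>R (v - x)"
    using \<open>s + t = 1\<close> by (simp add: algebra_simps flip: scaleR_add_left)
  ultimately show "s *\<^sub>R u + t *\<^sub>R v \<in> {w. \<phi> (w - x) \<le> e}"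
    using triangle[of "s *\<^sub>R (u - x)" "t *\<^sub>R (v - x)"] convex_bound_le[of "\<phi> (u - x)" e "\<phi> (v - x)" s t]
    by simp
qed

end

lemma uniformly_convex_norm_midpoint_less:
  assumes uc: "uniformly_convex_norm \<phi>" and "\<phi> u = \<phi> v" "u \<noteq> v" "0 < \<phi> u"
  shows "\<phi> (midpoint u v) < \<phi> u"
proof -
  interpret norm_function \<phi>
    using uc by unfold_locales (simp add: uniformly_convex_norm_def)
  obtain \<gamma> where "\<gamma> > 0" and cvx: "convex_on UNIV (\<lambda>x. \<phi> x - \<gamma> * norm x)"
    using uc by (auto simp: uniformly_convex_norm_def)
  have "(1 - 1/2) *\<^sub>R u + (1/2) *\<^sub>R v = midpoint u v"
    by (simp add: midpoint_def scaleR_add_right)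
  then have "\<phi> (midpoint u v) - \<gamma> * norm (midpoint u v)
      \<le> (1 - 1/2) * (\<phi> u - \<gamma> * norm u) + (1/2) * (\<phi> v - \<gamma> * norm v)"
    using convex_onD[OF cvx, of "1/2" u v] by simp
  moreover have "norm (midpoint u v) = norm (u + v) / 2"
    by (simp add: midpoint_def)
  ultimately have le: "\<phi> (midpoint u v) \<le> \<phi> u - \<gamma> / 2 * (norm u + norm v - norm (u + v))"
    using \<open>\<phi> u = \<phi> v\<close> by (simp add: algebra_simps add_divide_distrib)
  show ?thesis
  proof (cases "norm (u + v) = norm u + norm v")
    case True
    then have parallel: "norm u *\<^sub>R v = norm v *\<^sub>R u"
      by (simp add: norm_triangle_eq)
    have "norm u * \<phi> v = norm v * \<phi> u"
      using arg_cong[OF parallel, of \<phi>] by (simp only: scaleR abs_norm_cancel)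
    moreover have "v \<noteq> 0"
      using assms(2,4) pos_iff by metis
    ultimately have "norm u = norm v"
      using assms(2) by simp
    moreover have "u \<noteq> 0"
      using assms(4) pos_iff by blast
    ultimately have "u = v"
      using parallel by (metis norm_eq_zero scaleR_cancel_left)
    then show ?thesis
      using assms(3) by simp
  next
    case False
    then have "0 < \<gamma> / 2 * (norm u + norm v - norm (u + v))"
      using norm_triangle_ineq[of u v] \<open>\<gamma> > 0\<close> by simp
    then show ?thesis
      using le by linarith
  qed
qed

lemma has_derivative_along_line:
  fixes f :: "'a::real_normed_vector \<Rightarrow> real"
  assumes "(f has_derivative L) (at p)"
  shows "((\<lambda>t. f (p + t *\<^sub>R v)) has_real_derivative L v) (at 0)"
proof -
  have line: "((\<lambda>t. p + t *\<^sub>R v) has_derivative (\<lambda>t. t *\<^sub>R v)) (at 0)"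
    by (auto intro!: derivative_eq_intros)
  have "((\<lambda>t. f (p + t *\<^sub>R v)) has_derivative (\<lambda>t. L (t *\<^sub>R v))) (at 0)"
    using has_derivative_compose[OF line, of f L] assms by simp
  moreover have "(\<lambda>t. L (t *\<^sub>R v)) = (*) (L v)"
    using linear_scale[OF has_derivative_linear[OF assms]] by (simp add: fun_eq_iff)
  ultimately show ?thesis
    unfolding has_field_derivative_def by simp
qed

lemma has_derivative_imp_quotient_tendsto_at_right:
  fixes f :: "'a::real_normed_vector \<Rightarrow> real"
  assumes "(f has_derivative L) (at p)"
  shows "((\<lambda>t. (f (p + t *\<^sub>R v) - f p) / t) \<longlongrightarrow> L v) (at_right 0)"
  using has_field_derivative_at_within[OF has_derivative_along_line[OF assms]]
  unfolding has_field_derivative_iff by simp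

locale smooth_strictly_convex_norm = norm_function \<phi> for \<phi> :: "'a::euclidean_space \<Rightarrow> real" +
  fixes \<phi>' :: "'a \<Rightarrow> 'a \<Rightarrow> real"
  assumes has_derivative: "\<And>u. u \<noteq> 0 \<Longrightarrow> (\<phi> has_derivative \<phi>' u) (at u)"
    and midpoint_less: "\<And>u v. \<phi> u = \<phi> v \<Longrightarrow> u \<noteq> v \<Longrightarrow> 0 < \<phi> u \<Longrightarrow> \<phi> (midpoint u v) < \<phi> u"
begin

lemma derivative_self:
  assumes "u \<noteq> 0"
  shows "\<phi>' u u = \<phi> u"
proof -
  have "\<forall>\<^sub>F t in at_right 0. (\<phi> (u + t *\<^sub>R u) - \<phi> u) / t = \<phi> u"
  proof (rule eventually_at_right_less[THEN eventually_mono])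
    fix t :: real
    assume "0 < t"
    then have "\<phi> (u + t *\<^sub>R u) = (1 + t) * \<phi> u"
      using scaleR[of "1 + t" u] by (simp add: scaleR_add_left)
    with \<open>0 < t\<close> show "(\<phi> (u + t *\<^sub>R u) - \<phi> u) / t = \<phi> u"
      by (simp add: field_simps)
  qed
  then have "((\<lambda>t. (\<phi> (u + t *\<^sub>R u) - \<phi> u) / t) \<longlongrightarrow> \<phi> u) (at_right 0)"
    by (rule tendsto_eventually)
  then show ?thesis
    using has_derivative_imp_quotient_tendsto_at_right[OF has_derivative[OF assms]]
      tendsto_unique[OF trivial_limit_at_right_real] by blast
qed

lemma derivative_le:
  assumes "u \<noteq> 0"
  shows "\<phi>' u v \<le> \<phi> v"
proof (rule tendsto_upperbound)
  show "((\<lambda>t. (\<phi> (u + t *\<^sub>R v) - \<phi> u) / t) \<longlongrightarrow> \<phi>' u v) (at_right 0)"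
    by (rule has_derivative_imp_quotient_tendsto_at_right[OF has_derivative[OF assms]])
  show "\<forall>\<^sub>F t in at_right 0. (\<phi> (u + t *\<^sub>R v) - \<phi> u) / t \<le> \<phi> v"
  proof (rule eventually_at_right_less[THEN eventually_mono])
    fix t :: real
    assume "0 < t"
    then show "(\<phi> (u + t *\<^sub>R v) - \<phi> u) / t \<le> \<phi> v"
      using triangle[of u "t *\<^sub>R v"] by (simp add: field_simps)
  qed
qed simp

lemma derivative_inj:
  assumes "\<phi> u = \<phi> v" "0 < \<phi> u" "\<phi>' u = \<phi>' v"
  shows "u = v"
proof (rule ccontr)
  assume "u \<noteq> v"
  have "u \<noteq> 0" "v \<noteq> 0"
    using assms(1,2) by (auto simp: pos_iff)
  have "linear (\<phi>' u)"
    using has_derivative[OF \<open>u \<noteq> 0\<close>] by (rule has_derivative_linear)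
  then have "\<phi>' u (midpoint u v) = (\<phi>' u u + \<phi>' v v) / 2"
    unfolding midpoint_def assms(3)[symmetric] by (simp add: linear_add linear_scale)
  also have "\<dots> = \<phi> u"
    using derivative_self[OF \<open>u \<noteq> 0\<close>] derivative_self[OF \<open>v \<noteq> 0\<close>] assms(1) by simp
  finally have "\<phi> u \<le> \<phi> (midpoint u v)"
    using derivative_le[OF \<open>u \<noteq> 0\<close>] by metis
  then show False
    using midpoint_less[OF assms(1) \<open>u \<noteq> v\<close> assms(2)] by simp
qed

end

section \<open>Reach and lower reach\<close>

lemma ereal_le_if_all_less:
  fixes x :: ereal
  assumes "0 < \<rho>" and le: "\<And>t. 0 < t \<Longrightarrow> t < \<rho> \<Longrightarrow> ereal t \<le> x"
  shows "ereal \<rho> \<le> x"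
proof (rule dense_le_bounded[of 0])
  fix w :: ereal
  assume "0 < w" "w < ereal \<rho>"
  then show "w \<le> x"
    using le[of "real_of_ereal w"] by (cases w) auto
qed (use \<open>0 < \<rho>\<close> in simp)

lemma ereal_eq_infinity_if_all_le:
  fixes x :: ereal
  assumes "\<And>t. 0 < t \<Longrightarrow> ereal t \<le> x"
  shows "x = \<infinity>"
proof (rule ereal_top)
  fix B
  have "ereal (max B 1) \<le> x"
    by (rule assms) simp
  then show "ereal B \<le> x"
    by (rule order.trans[rotated]) simp
qed

lemma reach_geI:
  assumes "0 < \<rho>" and "\<And>t. 0 < t \<Longrightarrow> t < \<rho> \<Longrightarrow> dist_fun \<phi> K (a + t *\<^sub>R \<eta>) = t"
  shows "ereal \<rho> \<le> reach \<phi> K a \<eta>"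
  unfolding reach_def
proof (rule ereal_le_if_all_less[OF assms(1)])
  fix t
  assume "0 < t" "t < \<rho>"
  then show "ereal t \<le> Sup (ereal ` {s. 0 < s \<and> dist_fun \<phi> K (a + s *\<^sub>R \<eta>) = s})"
    using assms(2) by (intro Sup_upper imageI) simp
qed

lemma lebesgue_outer_eq_emeasure:
  assumes "A \<in> sets lebesgue"
  shows "lebesgue_outer A = emeasure lebesgue A"
  unfolding lebesgue_outer_def
proof (rule antisym)
  show "(INF B\<in>{B \<in> sets lebesgue. A \<subseteq> B}. emeasure lebesgue B) \<le> emeasure lebesgue A"
    using assms by (intro INF_lower) simp
  show "emeasure lebesgue A \<le> (INF B\<in>{B \<in> sets lebesgue. A \<subseteq> B}. emeasure lebesgue B)"
    by (intro INF_greatest emeasure_mono) auto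
qed

lemma density_one_interior:
  fixes A :: "'a::euclidean_space set"
  assumes "p \<in> interior A"
  shows "density_one A p"
proof -
  obtain e where "e > 0" "cball p e \<subseteq> A"
    using assms by (meson mem_interior_cball)
  have vol: "measure lebesgue (cball c r) = unit_ball_vol DIM('a) * r ^ DIM('a)" if "0 \<le> r" for c :: 'a and r
    using content_cball[OF that, of c] by simp
  have "unit_ball_vol DIM('a) \<noteq> 0"
    using unit_ball_vol_pos[of "real DIM('a)"] by force
  then have "enn2real (lebesgue_outer (A \<inter> cball p r)) / (measure lebesgue (cball (0::'a) 1) * r ^ DIM('a)) = 1"
    if "0 < r" "r < e" for r
    using that \<open>cball p e \<subseteq> A\<close> subset_cball[of r e p] vol[of r p] vol[of 1 0]
    by (simp add: lebesgue_outer_eq_emeasure measure_def Int_absorb1)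
  then have "\<forall>\<^sub>F r in at_right 0.
      enn2real (lebesgue_outer (A \<inter> cball p r)) / (measure lebesgue (cball (0::'a) 1) * r ^ DIM('a)) = 1"
    unfolding eventually_at_right_field using \<open>e > 0\<close> by blast
  then show ?thesis
    unfolding density_one_def by (rule tendsto_eventually)
qed

lemma lower_reach_geI:
  assumes "0 < r" "ereal r < reach \<phi> K a \<eta>" "1 < \<sigma>" "a + r *\<^sub>R \<eta> \<in> interior (K_sigma \<phi> K \<sigma>)"
  shows "ereal (\<sigma> * r) \<le> lower_reach \<phi> K a \<eta>"
proof -
  have "density_one (K_sigma \<phi> K \<sigma>) (a + r *\<^sub>R \<eta>)"
    using assms(4) by (rule density_one_interior)
  then show ?thesis
    unfolding lower_reach_def using assms(1-3) by (intro Sup_upper UnI1 CollectI exI conjI) auto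
qed

section \<open>Distance function and nearest points\<close>

definition nearest_point :: "('a::euclidean_space \<Rightarrow> real) \<Rightarrow> 'a set \<Rightarrow> 'a \<Rightarrow> 'a" where
  "nearest_point \<phi> K x = (SOME b. b \<in> K \<and> \<phi> (b - x) = dist_fun \<phi> K x)"

definition outer_normal :: "('a::euclidean_space \<Rightarrow> real) \<Rightarrow> 'a set \<Rightarrow> 'a \<Rightarrow> 'a" where
  "outer_normal \<phi> K x = inverse (dist_fun \<phi> K x) *\<^sub>R (x - nearest_point \<phi> K x)"

locale norm_distance = norm_function \<phi> for \<phi> :: "'a::euclidean_space \<Rightarrow> real" +
  fixes K :: "'a set"
  assumes closed: "closed K" and nonempty: "K \<noteq> {}"
begin

lemma dist_fun_le: "b \<in> K \<Longrightarrow> dist_fun \<phi> K x \<le> \<phi> (b - x)"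
  unfolding dist_fun_def by (rule cInf_lower) (auto intro: bdd_belowI[of _ 0])

lemma dist_fun_nonneg [simp]: "0 \<le> dist_fun \<phi> K x"
  unfolding dist_fun_def using nonempty by (intro cInf_greatest) auto

lemma nearest_point_exists: "\<exists>b\<in>K. \<phi> (b - x) = dist_fun \<phi> K x"
proof -
  obtain y where y: "y \<in> K"
    using nonempty by blast
  define S where "S = K \<inter> {b. \<phi> (b - x) \<le> \<phi> (y - x)}"
  have "compact S"
    unfolding S_def by (intro closed_Int_compact closed compact_sublevel)
  moreover have "y \<in> S"
    unfolding S_def using y by simp
  moreover have "continuous_on S (\<lambda>c. \<phi> (c - x))"
    by (intro continuous_intros)
  ultimately obtain b where b: "b \<in> S" "\<And>c. c \<in> S \<Longrightarrow> \<phi> (b - x) \<le> \<phi> (c - x)"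
    using continuous_attains_inf[of S "\<lambda>c. \<phi> (c - x)"] by blast
  then have "\<phi> (b - x) \<le> \<phi> (c - x)" if "c \<in> K" for c
    using b(2)[of c] b(2)[OF \<open>y \<in> S\<close>] that unfolding S_def by force
  then have "dist_fun \<phi> K x = \<phi> (b - x)"
    unfolding dist_fun_def using b(1) unfolding S_def by (intro cInf_eq_minimum) auto
  then show ?thesis
    using b(1) unfolding S_def by auto
qed

lemma nearest_point:
  "nearest_point \<phi> K x \<in> K" "\<phi> (nearest_point \<phi> K x - x) = dist_fun \<phi> K x"
  unfolding nearest_point_def using someI_ex[OF nearest_point_exists[unfolded Bex_def]] by auto

lemma dist_fun_triangle: "dist_fun \<phi> K x \<le> dist_fun \<phi> K y + \<phi> (x - y)"
  using dist_fun_le[OF nearest_point(1), of x y] nearest_point(2)[of y]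
    diff_triangle[of "nearest_point \<phi> K y" x y] minus_commute[of x y]
  by simp

lemma dist_fun_diff_le: "\<bar>dist_fun \<phi> K x - dist_fun \<phi> K y\<bar> \<le> \<phi> (x - y)"
  using dist_fun_triangle[of x y] dist_fun_triangle[of y x] minus_commute[of x y] by linarith

lemma continuous_on_dist_fun: "continuous_on S (dist_fun \<phi> K)"
proof -
  obtain M where "M > 0" and M: "\<And>x. \<phi> x \<le> M * norm x"
    using phi_le_multiple_norm by blast
  have "M-lipschitz_on S (dist_fun \<phi> K)"
    using \<open>M > 0\<close> dist_fun_diff_le M
    by (intro lipschitz_onI) (auto simp: dist_norm dist_real_def intro: order_trans)
  then show ?thesis
    by (rule lipschitz_on_continuous_on)
qed

lemma continuous_on_dist_fun_compose [continuous_intros]: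
  "continuous_on S f \<Longrightarrow> continuous_on S (\<lambda>x. dist_fun \<phi> K (f x))"
  by (rule continuous_on_compose2[OF continuous_on_dist_fun[of UNIV]]) auto

lemma dist_fun_pos_iff: "0 < dist_fun \<phi> K x \<longleftrightarrow> x \<notin> K"
proof
  assume "0 < dist_fun \<phi> K x"
  then show "x \<notin> K"
    using dist_fun_le[of x x] by auto
next
  assume "x \<notin> K"
  then have "nearest_point \<phi> K x \<noteq> x"
    using nearest_point(1) by metis
  then show "0 < dist_fun \<phi> K x"
    using nearest_point(2)[of x] pos_iff[of "nearest_point \<phi> K x - x"] by simp
qed

lemma dist_fun_ray_le: "a \<in> K \<Longrightarrow> \<phi> \<eta> = 1 \<Longrightarrow> 0 \<le> t \<Longrightarrow> dist_fun \<phi> K (a + t *\<^sub>R \<eta>) \<le> t"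
  using dist_fun_le[of a "a + t *\<^sub>R \<eta>"] by simp

lemma dist_fun_ray_shorten:
  assumes "a \<in> K" "\<phi> \<eta> = 1" "dist_fun \<phi> K (a + t *\<^sub>R \<eta>) = t" "0 \<le> t'" "t' \<le> t"
  shows "dist_fun \<phi> K (a + t' *\<^sub>R \<eta>) = t'"
proof -
  have "(a + t *\<^sub>R \<eta>) - (a + t' *\<^sub>R \<eta>) = (t - t') *\<^sub>R \<eta>"
    by (simp add: algebra_simps)
  then have "t \<le> dist_fun \<phi> K (a + t' *\<^sub>R \<eta>) + (t - t')"
    using dist_fun_triangle[of "a + t *\<^sub>R \<eta>" "a + t' *\<^sub>R \<eta>"] assms by simp
  then show ?thesis
    using dist_fun_ray_le[OF assms(1,2,4)] by linarith
qed

context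
  fixes x :: 'a
  assumes x: "x \<notin> K"
begin

lemma phi_outer_normal: "\<phi> (outer_normal \<phi> K x) = 1"
  using x nearest_point(2)[of x] minus_commute[of x] dist_fun_pos_iff[of x]
  by (simp add: outer_normal_def)

lemma nearest_point_plus_outer_normal: "nearest_point \<phi> K x + dist_fun \<phi> K x *\<^sub>R outer_normal \<phi> K x = x"
  using x dist_fun_pos_iff[of x] by (simp add: outer_normal_def)

lemma normal_bundle_nearest_point: "(nearest_point \<phi> K x, outer_normal \<phi> K x) \<in> normal_bundle \<phi> K"
  unfolding normal_bundle_def
  using nearest_point(1) phi_outer_normal nearest_point_plus_outer_normal x dist_fun_pos_iff[of x]
  by (auto intro!: exI[of _ "dist_fun \<phi> K x"])

lemma dist_fun_toward_nearest_point:
  assumes "0 \<le> \<epsilon>" "\<epsilon> \<le> dist_fun \<phi> K x"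
  defines "y \<equiv> x - \<epsilon> *\<^sub>R outer_normal \<phi> K x"
  shows "dist_fun \<phi> K y = dist_fun \<phi> K x - \<epsilon>"
    and "\<phi> (nearest_point \<phi> K x - y) = dist_fun \<phi> K x - \<epsilon>"
proof -
  have "nearest_point \<phi> K x - y = - ((dist_fun \<phi> K x - \<epsilon>) *\<^sub>R outer_normal \<phi> K x)"
    using nearest_point_plus_outer_normal unfolding y_def by (simp add: algebra_simps)
  then show near: "\<phi> (nearest_point \<phi> K x - y) = dist_fun \<phi> K x - \<epsilon>"
    using assms(2) phi_outer_normal by simp
  have "dist_fun \<phi> K x \<le> dist_fun \<phi> K y + \<epsilon>"
    using dist_fun_triangle[of x y] assms(1) phi_outer_normal unfolding y_def by simp
  then show "dist_fun \<phi> K y = dist_fun \<phi> K x - \<epsilon>"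
    using dist_fun_le[OF nearest_point(1)[of x], of y] near by simp
qed

lemma K_sigma_memI:
  assumes "0 < \<sigma>"
    and "ereal (\<sigma> * dist_fun \<phi> K x) \<le> reach \<phi> K (nearest_point \<phi> K x) (outer_normal \<phi> K x)"
  shows "x \<in> K_sigma \<phi> K \<sigma>"
proof -
  have "0 < \<sigma> * dist_fun \<phi> K x"
    using assms(1) x dist_fun_pos_iff by simp
  then show ?thesis
    unfolding K_sigma_def using normal_bundle_nearest_point nearest_point_plus_outer_normal assms(2)
    by (intro CollectI exI conjI) (rule sym)
qed

end

lemma dist_fun_ray_convex:
  assumes "convex K" and "(a, \<eta>) \<in> normal_bundle \<phi> K" and "0 < t"
  shows "dist_fun \<phi> K (a + t *\<^sub>R \<eta>) = t"
proof -
  obtain s where s: "0 < s" "dist_fun \<phi> K (a + s *\<^sub>R \<eta>) = s" and a: "a \<in> K" "\<phi> \<eta> = 1"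
    using assms(2) unfolding normal_bundle_def by auto
  show ?thesis
  proof (cases "t \<le> s")
    case True
    then show ?thesis
      using dist_fun_ray_shorten[OF a s(2)] \<open>0 < t\<close> by simp
  next
    case False
    define x where "x = a + t *\<^sub>R \<eta>"
    define c where "c = nearest_point \<phi> K x"
    define l where "l = s / t"
    have l: "0 \<le> l" "l \<le> 1"
      unfolding l_def using False s by auto
    \<comment> \<open>by convexity, the point \<open>(1 - l) a + l c\<close> of K is only \<open>l * dist_fun \<phi> K x\<close> away from \<open>a + s \<eta>\<close>\<close>
    have "(1 - l) *\<^sub>R a + l *\<^sub>R c \<in> K"
      using convexD_alt[OF assms(1) a(1) nearest_point(1) l] unfolding c_def by simp
    moreover have "(1 - l) *\<^sub>R a + l *\<^sub>R c - (a + s *\<^sub>R \<eta>) = l *\<^sub>R (c - x)"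
      unfolding l_def x_def using \<open>0 < t\<close> by (simp add: algebra_simps)
    ultimately have "s \<le> \<phi> (l *\<^sub>R (c - x))"
      using dist_fun_le[of _ "a + s *\<^sub>R \<eta>"] s(2) by metis
    also have "\<dots> = l * dist_fun \<phi> K x"
      using l(1) nearest_point(2)[of x] unfolding c_def by simp
    finally have "s \<le> l * dist_fun \<phi> K x" .
    then have "t \<le> dist_fun \<phi> K x"
      unfolding l_def using s(1) \<open>0 < t\<close> by (simp add: field_simps)
    then show ?thesis
      using dist_fun_ray_le[OF a, of t] \<open>0 < t\<close> unfolding x_def by simp
  qed
qed

lemma reach_convex:
  assumes "convex K" and "(a, \<eta>) \<in> normal_bundle \<phi> K"
  shows "reach \<phi> K a \<eta> = \<infinity>"
  using reach_geI dist_fun_ray_convex[OF assms] by (intro ereal_eq_infinity_if_all_le) blast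

lemma lower_reach_convex:
  assumes "convex K" and "(a, \<eta>) \<in> normal_bundle \<phi> K"
  shows "lower_reach \<phi> K a \<eta> = \<infinity>"
proof (rule ereal_eq_infinity_if_all_le)
  fix t :: real
  assume "0 < t"
  have "dist_fun \<phi> K (a + (t / 2) *\<^sub>R \<eta>) = t / 2"
    using \<open>0 < t\<close> by (intro dist_fun_ray_convex[OF assms]) simp
  then have "a + (t / 2) *\<^sub>R \<eta> \<in> - K"
    using \<open>0 < t\<close> dist_fun_pos_iff by force
  moreover have "- K \<subseteq> K_sigma \<phi> K 2"
    using K_sigma_memI reach_convex[OF assms(1) normal_bundle_nearest_point] by auto
  ultimately have "a + (t / 2) *\<^sub>R \<eta> \<in> interior (K_sigma \<phi> K 2)"
    using interior_maximal[OF _ open_Compl[OF closed]] by blast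
  then have "ereal (2 * (t / 2)) \<le> lower_reach \<phi> K a \<eta>"
    using \<open>0 < t\<close> reach_convex[OF assms] by (intro lower_reach_geI) auto
  then show "ereal t \<le> lower_reach \<phi> K a \<eta>"
    by simp
qed

end

section \<open>Uniqueness of nearest points and the reach of normal rays\<close>

locale smooth_norm_distance = smooth_strictly_convex_norm \<phi> \<phi>' + norm_distance \<phi> K
  for \<phi> :: "'a::euclidean_space \<Rightarrow> real" and \<phi>' K
begin

lemma nearest_point_derivative:
  assumes "x \<notin> K" and D: "(dist_fun \<phi> K has_derivative D) (at x)"
    and b: "b \<in> K" "\<phi> (b - x) = dist_fun \<phi> K x"
  shows "\<phi>' (b - x) w = - D w"
proof -
  have "b - x \<noteq> 0"
    using b \<open>x \<notin> K\<close> by auto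
  \<comment> \<open>g has a minimum at 0, since b stays a competitor for the distance of \<open>x - t w\<close>\<close>
  define g where "g t = \<phi> ((b - x) + t *\<^sub>R w) - dist_fun \<phi> K (x + t *\<^sub>R (- w))" for t :: real
  have "(g has_real_derivative \<phi>' (b - x) w - D (- w)) (at 0)"
    unfolding g_def
    by (intro DERIV_diff has_derivative_along_line has_derivative[OF \<open>b - x \<noteq> 0\<close>] D)
  moreover have "g 0 \<le> g t" for t
  proof -
    have "dist_fun \<phi> K (x + t *\<^sub>R (- w)) \<le> \<phi> ((b - x) + t *\<^sub>R w)"
      using dist_fun_le[OF b(1), of "x + t *\<^sub>R (- w)"] by (simp add: algebra_simps)
    then show ?thesis
      unfolding g_def using b(2) by simp
  qed
  ultimately have "\<phi>' (b - x) w - D (- w) = 0"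
    by (intro DERIV_local_min[of g _ 0 1]) auto
  then show ?thesis
    using linear_neg[OF has_derivative_linear[OF D]] by simp
qed

lemma nearest_point_unique:
  assumes "x \<notin> K" "dist_fun \<phi> K differentiable (at x)"
    and "b \<in> K" "\<phi> (b - x) = dist_fun \<phi> K x"
  shows "b = nearest_point \<phi> K x"
proof -
  obtain D where D: "(dist_fun \<phi> K has_derivative D) (at x)"
    using assms(2) unfolding differentiable_def by blast
  have "b - x = nearest_point \<phi> K x - x"
  proof (rule derivative_inj)
    show "\<phi> (b - x) = \<phi> (nearest_point \<phi> K x - x)"
      using assms(4) nearest_point(2) by simp
    show "0 < \<phi> (b - x)"
      using assms(1,4) dist_fun_pos_iff by simp
    show "\<phi>' (b - x) = \<phi>' (nearest_point \<phi> K x - x)"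
      using nearest_point_derivative[OF assms(1) D assms(3,4)]
        nearest_point_derivative[OF assms(1) D nearest_point]
      by auto
  qed
  then show ?thesis
    by simp
qed

lemma continuous_on_nearest_point:
  assumes "compact S" and good: "\<And>w. w \<in> S \<Longrightarrow> w \<notin> K \<and> dist_fun \<phi> K differentiable (at w)"
  shows "continuous_on S (nearest_point \<phi> K)"
proof -
  have "bounded ((\<lambda>w. dist_fun \<phi> K w + \<phi> w) ` S)"
    using assms(1) by (intro compact_imp_bounded compact_continuous_image continuous_intros)
  then obtain e where "\<forall>y \<in> (\<lambda>w. dist_fun \<phi> K w + \<phi> w) ` S. \<bar>y\<bar> \<le> e"
    unfolding bounded_real by blast
  then have e: "\<And>w. w \<in> S \<Longrightarrow> dist_fun \<phi> K w + \<phi> w \<le> e"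
    by auto
  have "\<phi> (nearest_point \<phi> K w - 0) \<le> e" if "w \<in> S" for w
    using triangle[of "nearest_point \<phi> K w - w" w] nearest_point(2)[of w] e[OF that] by simp
  then have bounded: "nearest_point \<phi> K \<in> S \<rightarrow> {b. \<phi> (b - 0) \<le> e}"
    by blast
  have "(\<lambda>w. (w, nearest_point \<phi> K w)) ` S = (S \<times> K) \<inter> {p. \<phi> (snd p - fst p) = dist_fun \<phi> K (fst p)}"
  proof (intro set_eqI iffI)
    fix p
    assume "p \<in> (S \<times> K) \<inter> {p. \<phi> (snd p - fst p) = dist_fun \<phi> K (fst p)}"
    then show "p \<in> (\<lambda>w. (w, nearest_point \<phi> K w)) ` S"
      using good[of "fst p"] nearest_point_unique[of "fst p" "snd p"] by (auto intro: image_eqI[of _ _ "fst p"])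
  qed (use nearest_point in auto)
  moreover have "closed {p :: 'a \<times> 'a. \<phi> (snd p - fst p) = dist_fun \<phi> K (fst p)}"
    by (intro closed_Collect_eq continuous_intros)
  then have "closed ((S \<times> K) \<inter> {p. \<phi> (snd p - fst p) = dist_fun \<phi> K (fst p)})"
    using compact_imp_closed[OF assms(1)] closed by (intro closed_Int closed_Times)
  ultimately show ?thesis
    using continuous_from_closed_graph[OF compact_sublevel bounded] by simp
qed

lemma continuous_on_outer_normal:
  assumes "compact S" and good: "\<And>w. w \<in> S \<Longrightarrow> w \<notin> K \<and> dist_fun \<phi> K differentiable (at w)"
  shows "continuous_on S (outer_normal \<phi> K)"
proof -
  have "dist_fun \<phi> K w \<noteq> 0" if "w \<in> S" for w
    using good[OF that] dist_fun_pos_iff[of w] by linarith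
  then show ?thesis
    unfolding outer_normal_def by (intro continuous_intros continuous_on_nearest_point[OF assms]) auto
qed

context
  fixes \<rho> :: real
  assumes differentiable_tube:
    "\<And>x. 0 < dist_fun \<phi> K x \<Longrightarrow> dist_fun \<phi> K x < \<rho> \<Longrightarrow> dist_fun \<phi> K differentiable (at x)"
begin

lemma dist_fun_ray_extend:
  assumes a: "a \<in> K" "\<phi> \<eta> = 1" and T: "0 < T" "T < \<rho>" "dist_fun \<phi> K (a + T *\<^sub>R \<eta>) = T"
  shows "\<exists>t>T. dist_fun \<phi> K (a + t *\<^sub>R \<eta>) = t"
proof -
  define x where "x = a + T *\<^sub>R \<eta>"
  define \<epsilon> where "\<epsilon> = min (T / 2) ((\<rho> - T) / 2)"
  define B where "B = {w. \<phi> (w - x) \<le> \<epsilon>}"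
  have \<epsilon>: "0 < \<epsilon>" "\<epsilon> \<le> T / 2" "T + \<epsilon> < \<rho>"
    using T unfolding \<epsilon>_def by (auto simp: min_def field_simps)
  have dist_B: "T - \<epsilon> \<le> dist_fun \<phi> K w \<and> dist_fun \<phi> K w \<le> T + \<epsilon>" if "w \<in> B" for w
    using dist_fun_diff_le[of w x] that T(3) unfolding B_def x_def by auto
  have good: "w \<notin> K \<and> dist_fun \<phi> K differentiable (at w)" if "w \<in> B" for w
    using dist_B[OF that] \<epsilon> differentiable_tube[of w] dist_fun_pos_iff[of w] by auto
  \<comment> \<open>a fixed point w of F has x on the segment from w to its nearest point, which is then a\<close>
  define F where "F w = x + \<epsilon> *\<^sub>R outer_normal \<phi> K w" for w
  have "continuous_on B F"
    unfolding F_def B_def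
    by (intro continuous_intros continuous_on_outer_normal compact_sublevel) (use good B_def in auto)
  moreover have "F \<in> B \<rightarrow> B"
    using good phi_outer_normal \<epsilon>(1) unfolding B_def F_def by auto
  moreover have "x \<in> B"
    using \<epsilon>(1) unfolding B_def by simp
  ultimately obtain w where w: "w \<in> B" "F w = w"
    using brouwer[of B F] compact_sublevel convex_sublevel unfolding B_def by blast
  then have x_eq: "x = w - \<epsilon> *\<^sub>R outer_normal \<phi> K w"
    unfolding F_def by (simp add: algebra_simps)
  have w_out: "w \<notin> K" and \<epsilon>_le: "\<epsilon> \<le> dist_fun \<phi> K w"
    using good[OF w(1)] dist_B[OF w(1)] \<epsilon> by auto
  note toward = dist_fun_toward_nearest_point[OF w_out less_imp_le[OF \<open>0 < \<epsilon>\<close>] \<epsilon>_le, folded x_eq]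
  have "x \<notin> K" "dist_fun \<phi> K differentiable (at x)"
    using good[of x] \<open>x \<in> B\<close> by auto
  moreover have "\<phi> (a - x) = dist_fun \<phi> K x"
    using a(2) T unfolding x_def by simp
  ultimately have "nearest_point \<phi> K w = a"
    using nearest_point_unique[of x] nearest_point(1) toward a(1) by metis
  moreover have dist_w: "dist_fun \<phi> K w = T + \<epsilon>"
    using toward(1) T(3) unfolding x_def by simp
  moreover have "x = nearest_point \<phi> K w + (dist_fun \<phi> K w - \<epsilon>) *\<^sub>R outer_normal \<phi> K w"
    using x_eq nearest_point_plus_outer_normal[OF w_out] by (simp add: algebra_simps)
  ultimately have "T *\<^sub>R \<eta> = T *\<^sub>R outer_normal \<phi> K w"
    unfolding x_def by simp
  then have "w = a + (T + \<epsilon>) *\<^sub>R \<eta>"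
    using x_eq T(1) unfolding x_def by (simp add: algebra_simps)
  then show ?thesis
    using dist_w \<epsilon>(1) by (intro exI[of _ "T + \<epsilon>"]) simp
qed

lemma dist_fun_ray_tube:
  assumes "(a, \<eta>) \<in> normal_bundle \<phi> K" "0 \<le> t" "t \<le> \<rho>"
  shows "dist_fun \<phi> K (a + t *\<^sub>R \<eta>) = t"
proof -
  obtain s where s: "0 < s" "dist_fun \<phi> K (a + s *\<^sub>R \<eta>) = s" and a: "a \<in> K" "\<phi> \<eta> = 1"
    using assms(1) unfolding normal_bundle_def by auto
  define S where "S = {0..\<rho>} \<inter> {t. dist_fun \<phi> K (a + t *\<^sub>R \<eta>) = t}"
  have "min s \<rho> \<in> S"
    using dist_fun_ray_shorten[OF a s(2), of "min s \<rho>"] s(1) assms(2,3) unfolding S_def by auto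
  moreover have "closed S"
    unfolding S_def by (intro closed_Int closed_atLeastAtMost closed_Collect_eq continuous_intros)
  moreover have "bdd_above S"
    unfolding S_def by auto
  ultimately have "Sup S \<in> S" and Sup_ge: "min s \<rho> \<le> Sup S"
    using closed_contains_Sup cSup_upper by blast+
  have "Sup S = \<rho>"
  proof (rule ccontr)
    assume "Sup S \<noteq> \<rho>"
    then have "0 < Sup S" "Sup S < \<rho>"
      using \<open>Sup S \<in> S\<close> Sup_ge s(1) assms(2,3) unfolding S_def by auto
    then obtain t' where "Sup S < t'" "dist_fun \<phi> K (a + t' *\<^sub>R \<eta>) = t'"
      using dist_fun_ray_extend[OF a] \<open>Sup S \<in> S\<close> unfolding S_def by blast
    then have "min t' \<rho> \<in> S"
      using dist_fun_ray_shorten[OF a, of t' "min t' \<rho>"] \<open>0 < Sup S\<close> \<open>Sup S < \<rho>\<close>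
      unfolding S_def by auto
    then have "min t' \<rho> \<le> Sup S"
      using \<open>bdd_above S\<close> by (rule cSup_upper)
    then show False
      using \<open>Sup S < t'\<close> \<open>Sup S < \<rho>\<close> by linarith
  qed
  then show ?thesis
    using \<open>Sup S \<in> S\<close> dist_fun_ray_shorten[OF a, of \<rho> t] assms(2,3) unfolding S_def by auto
qed

lemma lower_reach_ge_tube:
  assumes "0 < \<rho>" and "(a, \<eta>) \<in> normal_bundle \<phi> K"
  shows "ereal \<rho> \<le> lower_reach \<phi> K a \<eta>"
proof (rule ereal_le_if_all_less[OF assms(1)])
  fix t
  assume t: "0 < t" "t < \<rho>"
  have reach: "ereal \<rho> \<le> reach \<phi> K b \<xi>" if "(b, \<xi>) \<in> normal_bundle \<phi> K" for b \<xi>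
    using assms(1) dist_fun_ray_tube[OF that] by (intro reach_geI) auto
  \<comment> \<open>with \<open>\<sigma> = \<rho> / t\<close>, the open shell \<open>0 < dist_fun \<phi> K < t\<close> lies in \<open>K_sigma \<phi> K \<sigma>\<close>\<close>
  define \<sigma> where "\<sigma> = \<rho> / t"
  define r where "r = t / \<sigma>"
  have \<sigma>: "1 < \<sigma>" and r: "0 < r" "r < t" "\<sigma> * r = t"
    using t unfolding \<sigma>_def r_def by (auto simp: field_simps)
  define G where "G = dist_fun \<phi> K -` {0<..<t}"
  have "open G"
    unfolding G_def by (intro open_vimage continuous_on_dist_fun) simp
  moreover have "G \<subseteq> K_sigma \<phi> K \<sigma>"
  proof
    fix z
    assume "z \<in> G"
    then have "z \<notin> K" "\<sigma> * dist_fun \<phi> K z \<le> \<rho>"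
      using dist_fun_pos_iff[of z] t unfolding G_def \<sigma>_def by (auto simp: field_simps)
    then show "z \<in> K_sigma \<phi> K \<sigma>"
      using \<sigma> order_trans[OF _ reach[OF normal_bundle_nearest_point]] by (intro K_sigma_memI) auto
  qed
  moreover have "a + r *\<^sub>R \<eta> \<in> G"
    using dist_fun_ray_tube[OF assms(2), of r] r t unfolding G_def by simp
  ultimately have "a + r *\<^sub>R \<eta> \<in> interior (K_sigma \<phi> K \<sigma>)"
    by (meson interior_maximal subsetD)
  moreover have "ereal r < reach \<phi> K a \<eta>"
    using less_le_trans[OF _ reach[OF assms(2)], of "ereal r"] r(2) t(2) by simp
  ultimately show "ereal t \<le> lower_reach \<phi> K a \<eta>"
    using lower_reach_geI[OF r(1) _ \<sigma>] r(3) by auto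
qed

end

end

theorem lemma4p16:
  fixes \<phi> :: "'a::euclidean_space \<Rightarrow> real" and K :: "'a set" and \<rho> :: real
  assumes "uniformly_convex_norm \<phi>"
    and "C2_on (UNIV - {0}) \<phi>"
    and "closed K"
    and "\<rho> > 0"
    and "{x. dist_fun \<phi> K x < \<rho>} \<inter> Sigma_set \<phi> K = {}"
  shows "(\<forall>(a, \<eta>) \<in> normal_bundle \<phi> K. ereal \<rho> \<le> lower_reach \<phi> K a \<eta>)
    \<and> (convex K \<longrightarrow> (\<forall>(a, \<eta>) \<in> normal_bundle \<phi> K. lower_reach \<phi> K a \<eta> = (\<infinity>::ereal)))"
proof (cases "K = {}")
  case True
  then show ?thesis
    by (simp add: normal_bundle_def)
next
  case False
  \<comment> \<open>only the first derivative provided by \<open>C2_on\<close> is needed\<close>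
  obtain \<phi>' :: "'a \<Rightarrow> 'a \<Rightarrow>\<^sub>L real" where "\<And>u. u \<noteq> 0 \<Longrightarrow> (\<phi> has_derivative \<phi>' u) (at u)"
    using assms(2) unfolding C2_on_def by blast
  then interpret smooth_norm_distance \<phi> "\<lambda>u. blinfun_apply (\<phi>' u)" K
    using assms(1,3) False uniformly_convex_norm_midpoint_less[OF assms(1)]
    by unfold_locales (auto simp: uniformly_convex_norm_def)
  have "dist_fun \<phi> K differentiable (at x)" if "0 < dist_fun \<phi> K x" "dist_fun \<phi> K x < \<rho>" for x
    using that assms(5) dist_fun_pos_iff unfolding Sigma_set_def by blast
  then show ?thesis
    using lower_reach_ge_tube[OF _ assms(4)] lower_reach_convex by blast
qed

end
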